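(* Fix $a\in(0,1/2]$ and $\beta\in(\frac12,1)$. For each $n$ let $k=2\lfloor \beta n/2\rfloor$ and let $\mathbf{x}^*\in\mathbb{R}^n$ be the vector whose only possibly nonzero entries are the $k$-th and $(k+1)$-th, \[ x_k^*=\frac{1+2\left(\frac kn+\frac1n\right)^{2}-2\left(\frac kn+\frac1n\right)-\frac1n}{\binom nk\,2\frac kn\left(2\frac kn-1+\frac1n\left(2\frac kn+\frac2n-1\right)\right)},\qquad x_{k+1}^*=\frac{1-\frac kn}{\binom n{k+1}\left(2\frac kn-1+\frac1n\left(2\frac kn+\frac2n-1\right)\right)}. \] Then for all sufficiently large $n$, $\mathbf{x}^*$ is a feasible point of the linear program defining $\overline{\Lambda}(n;a)$, and the value of its objective at $\mathbf{x}^*$ converges, as $n\to\infty$, to \[ -\left[1+(1-2\beta)\left(\tfrac1a-1\right)\right]\frac{1}{2\beta(2\beta-1)}. \] Consequently $\liminf_{n\to\infty}\overline{\Lambda}(n;a)\ge \sup_{\beta\in(1/2,1)}\left(-\left[1+(1-2\beta)(\frac1a-1)\right]\frac{1}{2\beta(2\beta-1)}\right)=\theta(a)$, where $\theta(a)=\frac{(1-\sqrt a)^2}{a}$ for $0<a<\frac14$ (the supremum being attained at $\beta=\frac{1}{2(1-\sqrt a)}$) and $\theta(a)=\frac{1}{2a}-1$ for $\frac14\le a\le\frac12$.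
   Context: For integers $n\ge1$, $k\in[0:n]$ and real $x$, the Krawtchouk polynomial is $K_k(x)=K_k^{(n)}(x):=\sum_{j=0}^{k}(-1)^{j}\binom{x}{j}\binom{n-x}{k-j}$, with generalized binomial coefficients $\binom{x}{j}=\frac{x(x-1)\cdots(x-j+1)}{j!}$. Here $[m:n]=\{m,m+1,\dots,n\}$. For real $a\in(0,1/2]$, $\overline{\Lambda}(n;a)$ is the optimal value of the linear program: maximize $-\sum_{k=1}^{n}\left[K_k(0)+K_k(1)\left(\frac1a-1\right)\right]x_k$ over $(x_1,\dots,x_n)\in\mathbb{R}^n$ subject to $x_k\ge0$ for $k\in[1:n]$ and $\sum_{k=1}^{n}[K_k(1)-K_k(i)]x_k\ge -1$ for all $i\in[2:n]$. *)

theory Defs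
  imports "HOL-Analysis.Analysis"
begin

definition kraw :: "nat \<Rightarrow> nat \<Rightarrow> real \<Rightarrow> real" where
  "kraw n k x = (\<Sum>j=0..k. (-1)^j * (x gchoose j) * ((real n - x) gchoose (k - j)))"

text \<open>Objective of the LP defining Lambda-bar(n;a); vectors in R^n are functions
  nat => real of which only the entries 1..n are used.\<close>
definition lp_objective :: "nat \<Rightarrow> real \<Rightarrow> (nat \<Rightarrow> real) \<Rightarrow> real" where
  "lp_objective n a x = - (\<Sum>k=1..n. (kraw n k 0 + kraw n k 1 * (1/a - 1)) * x k)"

definition lp_feasible :: "nat \<Rightarrow> (nat \<Rightarrow> real) \<Rightarrow> bool" where
  "lp_feasible n x \<longleftrightarrow> (\<forall>k\<in>{1..n}. x k \<ge> 0) \<and>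
     (\<forall>i\<in>{2..n}. (\<Sum>k=1..n. (kraw n k 1 - kraw n k (real i)) * x k) \<ge> -1)"

text \<open>Optimal value of the LP (as an extended real: supremum of the objective over
  the feasible set; the feasible set is nonempty since 0 is feasible).\<close>
definition Lambda_bar :: "nat \<Rightarrow> real \<Rightarrow> ereal" where
  "Lambda_bar n a = (SUP x\<in>{x. lp_feasible n x}. ereal (lp_objective n a x))"

definition kidx :: "real \<Rightarrow> nat \<Rightarrow> nat" where
  "kidx \<beta> n = nat (2 * \<lfloor>\<beta> * real n / 2\<rfloor>)"

definition xstar :: "real \<Rightarrow> nat \<Rightarrow> nat \<Rightarrow> real" where
  "xstar \<beta> n j =
    (let k = kidx \<beta> n; r = real k / real n; t = 1 / real n;
         D = 2 * r - 1 + t * (2 * r + 2 * t - 1) in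
     if j = k then (1 + 2 * (r + t)^2 - 2 * (r + t) - t) / (real (n choose k) * 2 * r * D)
     else if j = k + 1 then (1 - r) / (real (n choose (k + 1)) * D)
     else 0)"

definition theta :: "real \<Rightarrow> real" where
  "theta a = (if a < 1/4 then (1 - sqrt a)^2 / a else 1 / (2 * a) - 1)"

definition bound_fun :: "real \<Rightarrow> real \<Rightarrow> real" where
  "bound_fun a \<beta> = - (1 + (1 - 2 * \<beta>) * (1 / a - 1)) * (1 / (2 * \<beta> * (2 * \<beta> - 1)))"

end

theory Submission
  imports Defs
begin

text \<open>
  Normalise the Krawtchouk polynomials as \<open>K_k(x) / binom n k\<close>. By the symmetry
  \<open>binom n i K_k(i) = binom n k K_i(k)\<close> the value at \<open>i\<close> is, as a function of the degree \<open>i\<close>,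
  an alternating hypergeometric average, and it satisfies the one-step recurrence
  \<open>E(t+1) = (1 - 2k/n) E(t) + error\<close>, where the hypergeometric variance bounds the
  error by \<open>4/\<surd>n\<close>. Hence \<open>|K_k(i)| / binom n k \<le> |1 - 2k/n|\<^sup>3 + O(1/\<surd>n)\<close> for
  \<open>3 \<le> i \<le> n - 3\<close> (using the reflection \<open>i \<mapsto> n - i\<close>). The vector \<open>x*\<close> lives on the
  degrees \<open>k, k+1\<close> with \<open>k\<close> even; it makes the constraints at \<open>i = 2\<close> and \<open>i = n\<close> tight,
  and the remaining constraints hold with room to spare in the limit \<open>k/n \<rightarrow> \<beta>\<close>.
  Only \<open>K_j(0)\<close> and \<open>K_j(1)\<close> enter the objective, so its limit is elementary, and the
  supremum over \<open>\<beta>\<close> is a one-variable optimisation (a perfect square for \<open>a < 1/4\<close>,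
  attained only as \<open>\<beta> \<rightarrow> 1\<close> otherwise).
\<close>

lemma Suc_times_choose_Suc_real:
  "real (Suc s) * real (m choose Suc s) = (real m - real s) * real (m choose s)"
proof -
  have "real (Suc s) * real (m choose Suc s) = of_nat (Suc s) * (real m gchoose Suc s)"
    by (simp add: binomial_gbinomial)
  also have "\<dots> = real m * ((real m - 1) gchoose s)" by (rule gbinomial_absorption)
  also have "\<dots> = (real m - real s) * (real m gchoose s)" by (simp add: gbinomial_absorb_comp)
  finally show ?thesis by (simp add: binomial_gbinomial)
qed

lemma alternating_convolution_Suc:
  "(real t + 1) * (\<Sum>h\<le>Suc t. (-1)^h * real (j choose h) * real (m choose (Suc t - h))) =
   (\<Sum>h\<le>t. (-1)^h * real (j choose h) * real (m choose (t - h)) * (real m - real t + 2 * real h - real j))"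
proof -
  define c where "c h = (-1::real)^h * real (j choose h) * real (m choose (Suc t - h))" for h
  have "(real t + 1) * (\<Sum>h\<le>Suc t. c h) = (\<Sum>h\<le>Suc t. c h * real (Suc t - h) + c h * real h)"
    unfolding sum_distrib_left by (rule sum.cong) (auto simp: algebra_simps of_nat_diff)
  also have "\<dots> = (\<Sum>h\<le>Suc t. c h * real (Suc t - h)) + (\<Sum>h\<le>Suc t. c h * real h)"
    by (rule sum.distrib)
  also have "(\<Sum>h\<le>Suc t. c h * real (Suc t - h)) = (\<Sum>h\<le>t. c h * real (Suc t - h))"
    by simp
  also have "(\<Sum>h\<le>Suc t. c h * real h) = (\<Sum>h\<le>t. c (Suc h) * real (Suc h))"
    by (subst sum.atMost_Suc_shift) simp
  also have "(\<Sum>h\<le>t. c h * real (Suc t - h)) =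
      (\<Sum>h\<le>t. (-1)^h * real (j choose h) * real (m choose (t - h)) * (real m - real t + real h))"
  proof (rule sum.cong[OF refl])
    fix h assume "h \<in> {..t}"
    then have h: "h \<le> t" by simp
    then have "real (Suc t - h) * real (m choose (Suc t - h)) = (real m - real (t - h)) * real (m choose (t - h))"
      using Suc_times_choose_Suc_real[of "t - h" m] by (simp add: Suc_diff_le)
    then have "c h * real (Suc t - h) = (-1)^h * real (j choose h) * ((real m - real (t - h)) * real (m choose (t - h)))"
      unfolding c_def by (metis mult.assoc mult.commute)
    then show "c h * real (Suc t - h) = (-1)^h * real (j choose h) * real (m choose (t - h)) * (real m - real t + real h)"
      using h by (simp add: of_nat_diff algebra_simps)
  qed
  also have "(\<Sum>h\<le>t. c (Suc h) * real (Suc h)) =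
      (\<Sum>h\<le>t. - ((-1)^h * real (j choose h) * real (m choose (t - h)) * (real j - real h)))"
  proof (rule sum.cong[OF refl])
    fix h
    have "c (Suc h) * real (Suc h) = - ((-1)^h * real (m choose (t - h)) * (real (Suc h) * real (j choose Suc h)))"
      unfolding c_def by simp
    then show "c (Suc h) * real (Suc h) = - ((-1)^h * real (j choose h) * real (m choose (t - h)) * (real j - real h))"
      by (simp only: Suc_times_choose_Suc_real) (simp add: algebra_simps)
  qed
  finally show ?thesis
    unfolding c_def by (simp add: sum_negf[symmetric] sum.distrib[symmetric] algebra_simps)
qed

lemma vandermonde_first_moment_Suc:
  "(\<Sum>h\<le>Suc t. h * (Suc j choose h) * (m choose (Suc t - h))) = Suc j * ((j + m) choose t)"
proof -
  have "(\<Sum>h\<le>Suc t. h * (Suc j choose h) * (m choose (Suc t - h)))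
      = (\<Sum>h\<le>t. Suc h * (Suc j choose Suc h) * (m choose (t - h)))"
    by (subst sum.atMost_Suc_shift) simp
  also have "\<dots> = (\<Sum>h\<le>t. Suc j * ((j choose h) * (m choose (t - h))))"
    by (rule sum.cong[OF refl]) (simp only: Suc_times_binomial mult.assoc)
  also have "\<dots> = Suc j * ((j + m) choose t)"
    by (simp only: sum_distrib_left[symmetric] vandermonde)
  finally show ?thesis .
qed

lemma vandermonde_first_moment:
  "(\<Sum>h\<le>t. real h * real (j choose h) * real (m choose (t - h))) * real (j + m)
   = real t * real j * real ((j + m) choose t)"
proof (cases "t = 0 \<or> j = 0")
  case True
  have "(\<Sum>h\<le>t. real h * real (j choose h) * real (m choose (t - h))) = 0"
    using True by (intro sum.neutral) auto
  then show ?thesis using True by auto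
next
  case False
  then obtain t' j' where t: "t = Suc t'" and j: "j = Suc j'" by (metis not0_implies_Suc)
  have sum: "(\<Sum>h\<le>t. real h * real (j choose h) * real (m choose (t - h))) = real j * real ((j' + m) choose t')"
    using arg_cong[OF vandermonde_first_moment_Suc[where t=t' and j=j' and m=m], of real]
    unfolding t j by (simp only: of_nat_sum of_nat_mult)
  have "real (Suc (j' + m) * ((j' + m) choose t')) = real ((Suc (j' + m) choose Suc t') * Suc t')"
    by (rule arg_cong) (rule Suc_times_binomial_eq)
  then have absorb: "real (j + m) * real ((j' + m) choose t') = real t * real ((j + m) choose t)"
    unfolding t j by (simp only: of_nat_mult add_Suc mult.commute)
  have "real j * real ((j' + m) choose t') * real (j + m) = real j * (real (j + m) * real ((j' + m) choose t'))"
    by (simp only: mult_ac)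
  also have "\<dots> = real t * real j * real ((j + m) choose t)"
    unfolding absorb by (simp only: mult_ac)
  finally show ?thesis unfolding sum .
qed

lemma vandermonde_second_moment_Suc:
  "(\<Sum>h\<le>Suc (Suc t). h * (h - 1) * (Suc (Suc j) choose h) * (m choose (Suc (Suc t) - h)))
    = Suc (Suc j) * Suc j * ((j + m) choose t)"
proof -
  have "(\<Sum>h\<le>Suc (Suc t). h * (h - 1) * (Suc (Suc j) choose h) * (m choose (Suc (Suc t) - h)))
      = (\<Sum>h\<le>t. Suc (Suc h) * Suc h * (Suc (Suc j) choose Suc (Suc h)) * (m choose (t - h)))"
    by (simp add: sum.atMost_Suc_shift del: sum.atMost_Suc)
  also have "\<dots> = (\<Sum>h\<le>t. Suc (Suc j) * Suc j * ((j choose h) * (m choose (t - h))))"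
  proof (rule sum.cong[OF refl])
    fix h
    have "Suc (Suc h) * Suc h * (Suc (Suc j) choose Suc (Suc h)) = Suc h * (Suc (Suc h) * (Suc (Suc j) choose Suc (Suc h)))"
      by (simp only: mult_ac)
    also have "\<dots> = Suc h * (Suc (Suc j) * (Suc j choose Suc h))" by (simp only: Suc_times_binomial)
    also have "\<dots> = Suc (Suc j) * (Suc h * (Suc j choose Suc h))" by (simp only: mult_ac)
    also have "\<dots> = Suc (Suc j) * (Suc j * (j choose h))" by (simp only: Suc_times_binomial)
    finally have X: "Suc (Suc h) * Suc h * (Suc (Suc j) choose Suc (Suc h)) = Suc (Suc j) * (Suc j * (j choose h))" .
    show "Suc (Suc h) * Suc h * (Suc (Suc j) choose Suc (Suc h)) * (m choose (t - h)) =
         Suc (Suc j) * Suc j * ((j choose h) * (m choose (t - h)))" unfolding X by (simp only: mult.assoc)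
  qed
  also have "\<dots> = Suc (Suc j) * Suc j * ((j + m) choose t)"
    by (simp only: sum_distrib_left[symmetric] vandermonde)
  finally show ?thesis .
qed

lemma Suc_Suc_times_binomial_real:
  "real (Suc (Suc n)) * real (Suc n) * real (n choose k)
    = real (Suc (Suc k)) * real (Suc k) * real (Suc (Suc n) choose Suc (Suc k))"
proof -
  have "Suc (Suc n) * (Suc n * (n choose k)) = Suc (Suc n) * ((Suc n choose Suc k) * Suc k)"
    by (simp only: Suc_times_binomial_eq)
  also have "\<dots> = Suc k * (Suc (Suc n) * (Suc n choose Suc k))" by (simp only: mult_ac)
  also have "\<dots> = Suc k * ((Suc (Suc n) choose Suc (Suc k)) * Suc (Suc k))" by (simp only: Suc_times_binomial_eq)
  finally have "real (Suc (Suc n) * (Suc n * (n choose k)))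
      = real (Suc k * ((Suc (Suc n) choose Suc (Suc k)) * Suc (Suc k)))"
    by (rule arg_cong)
  then show ?thesis by (simp only: of_nat_mult mult_ac)
qed

lemma vandermonde_second_moment:
  "(\<Sum>h\<le>t. real h * (real h - 1) * real (j choose h) * real (m choose (t - h))) * (real (j + m) * (real (j + m) - 1))
   = real t * (real t - 1) * real j * (real j - 1) * real ((j + m) choose t)"
proof (cases "t < 2 \<or> j < 2")
  case True
  have "(\<Sum>h\<le>t. real h * (real h - 1) * real (j choose h) * real (m choose (t - h))) = 0"
  proof (rule sum.neutral, intro ballI)
    fix h assume "h \<in> {..t}"
    then show "real h * (real h - 1) * real (j choose h) * real (m choose (t - h)) = 0"
      using True by (cases "h < 2") (auto simp: less_2_cases_iff)
  qed
  then show ?thesis using True by (auto simp: less_2_cases_iff)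
next
  case False
  then obtain t' j' where t: "t = Suc (Suc t')" and j: "j = Suc (Suc j')"
    by (metis add_2_eq_Suc le_add_diff_inverse not_less)
  have "(\<Sum>h\<le>t. real h * (real h - 1) * real (j choose h) * real (m choose (t - h)))
      = real (\<Sum>h\<le>Suc (Suc t'). h * (h - 1) * (Suc (Suc j') choose h) * (m choose (Suc (Suc t') - h)))"
    unfolding t j of_nat_sum by (rule sum.cong[OF refl]) (auto simp: of_nat_diff)
  also have "\<dots> = real j * (real j - 1) * real ((j' + m) choose t')"
    unfolding vandermonde_second_moment_Suc j by (simp add: algebra_simps)
  finally have sum: "(\<Sum>h\<le>t. real h * (real h - 1) * real (j choose h) * real (m choose (t - h)))
      = real j * (real j - 1) * real ((j' + m) choose t')" .
  have absorb: "real (j + m) * (real (j + m) - 1) * real ((j' + m) choose t')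
      = real t * (real t - 1) * real ((j + m) choose t)"
    using Suc_Suc_times_binomial_real[of "j' + m" t'] by (simp add: t j)
  have "real j * (real j - 1) * real ((j' + m) choose t') * (real (j + m) * (real (j + m) - 1))
      = real j * (real j - 1) * (real (j + m) * (real (j + m) - 1) * real ((j' + m) choose t'))"
    by (simp only: mult_ac)
  also have "\<dots> = real t * (real t - 1) * real j * (real j - 1) * real ((j + m) choose t)"
    unfolding absorb by (simp only: mult_ac)
  finally show ?thesis unfolding sum .
qed

definition hypergeom :: "nat \<Rightarrow> nat \<Rightarrow> nat \<Rightarrow> nat \<Rightarrow> real" where
  "hypergeom n j t h = real (j choose h) * real ((n - j) choose (t - h)) / real (n choose t)"

lemma hypergeom_nonneg: "0 \<le> hypergeom n j t h"
  by (simp add: hypergeom_def)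

lemma sum_hypergeom:
  assumes "j \<le> n" "t \<le> n"
  shows "(\<Sum>h\<le>t. hypergeom n j t h) = 1"
proof -
  have "(\<Sum>h\<le>t. real (j choose h) * real ((n - j) choose (t - h))) = real (n choose t)"
    using vandermonde[of j "n - j" t] assms(1) by (simp flip: of_nat_sum of_nat_mult)
  then show ?thesis
    using assms(2) by (simp add: hypergeom_def flip: sum_divide_distrib)
qed

lemma hypergeom_mean:
  assumes "j \<le> n" "t \<le> n" "0 < n"
  shows "(\<Sum>h\<le>t. real h * hypergeom n j t h) = real t * real j / real n"
proof -
  have "(\<Sum>h\<le>t. real h * real (j choose h) * real ((n - j) choose (t - h))) * real n
      = real t * real j * real (n choose t)"
    using vandermonde_first_moment[where t=t and j=j and m="n - j"] assms(1) by simp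
  then show ?thesis
    using assms(2,3) by (simp add: hypergeom_def sum_divide_distrib[symmetric] field_simps mult.assoc)
qed

lemma hypergeom_factorial_moment:
  assumes "j \<le> n" "t \<le> n" "2 \<le> n"
  shows "(\<Sum>h\<le>t. real h * (real h - 1) * hypergeom n j t h)
    = real t * (real t - 1) * real j * (real j - 1) / (real n * (real n - 1))"
proof -
  define S where "S = (\<Sum>h\<le>t. real h * (real h - 1) * real (j choose h) * real ((n - j) choose (t - h)))"
  have "S * (real n * (real n - 1)) = real t * (real t - 1) * real j * (real j - 1) * real (n choose t)"
    unfolding S_def using vandermonde_second_moment[where t=t and j=j and m="n - j"] assms(1) by simp
  moreover have "real (n choose t) \<noteq> 0" "real n * (real n - 1) \<noteq> 0" using assms(2,3) by auto
  ultimately have "S / real (n choose t) = real t * (real t - 1) * real j * (real j - 1) / (real n * (real n - 1))"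
    by (subst frac_eq_eq) (simp_all add: mult_ac)
  then show ?thesis
    unfolding S_def by (simp add: hypergeom_def sum_divide_distrib mult.assoc)
qed

lemma hypergeom_variance:
  assumes "j \<le> n" "t \<le> n" "2 \<le> n"
  shows "(\<Sum>h\<le>t. hypergeom n j t h * (real h - real t * real j / real n)^2)
    = real t * real j * (real n - real t) * (real n - real j) / (real n ^ 2 * (real n - 1))"
proof -
  define \<mu> where "\<mu> = real t * real j / real n"
  have "(\<Sum>h\<le>t. hypergeom n j t h * (real h - \<mu>)^2)
      = (\<Sum>h\<le>t. real h * (real h - 1) * hypergeom n j t h) + (1 - 2 * \<mu>) * (\<Sum>h\<le>t. real h * hypergeom n j t h)
        + \<mu>^2 * (\<Sum>h\<le>t. hypergeom n j t h)"
    by (simp add: sum_distrib_left sum.distrib[symmetric] power2_eq_square algebra_simps)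
  also have "\<dots> = real t * (real t - 1) * real j * (real j - 1) / (real n * (real n - 1)) + (1 - 2 * \<mu>) * \<mu> + \<mu>^2"
    using assms by (simp add: hypergeom_factorial_moment hypergeom_mean sum_hypergeom \<mu>_def)
  also have "\<dots> = real t * real j * (real n - real t) * (real n - real j) / (real n ^ 2 * (real n - 1))"
    unfolding \<mu>_def using assms(3) by (simp add: field_simps power2_eq_square)
  finally show ?thesis unfolding \<mu>_def .
qed

lemma hypergeom_variance_le:
  assumes "j \<le> n" "t \<le> n" "2 \<le> n"
  shows "(\<Sum>h\<le>t. hypergeom n j t h * (real h - real t * real j / real n)^2) \<le> real t"
proof -
  have n: "real n > 1" using assms(3) by simp
  have "real j * (real n - real j) \<le> real n * (real n - 1)"
  proof (cases "j = n")
    case False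
    then have "real j \<le> real n - 1" using assms(1) by linarith
    then show ?thesis using mult_mono[of "real j" "real n - 1" "real n - real j" "real n"] n
      by (simp add: mult.commute)
  qed (use n in simp)
  moreover have "0 \<le> real n - real t" "real n - real t \<le> real n" using assms(2) by auto
  ultimately have "real j * (real n - real j) * (real n - real t) \<le> real n * (real n - 1) * real n"
    using mult_mono[of "real j * (real n - real j)" "real n * (real n - 1)" "real n - real t" "real n"] n
    by simp
  from mult_left_mono[OF this, of "real t"]
  have "real t * real j * (real n - real t) * (real n - real j) \<le> real t * (real n ^ 2 * (real n - 1))"
    by (simp add: power2_eq_square mult_ac)
  then have "real t * real j * (real n - real t) * (real n - real j) / (real n ^ 2 * (real n - 1)) \<le> real t"
    using n by (simp add: divide_le_eq)
  then show ?thesis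
    by (simp only: hypergeom_variance[OF assms])
qed

lemma kraw_of_nat:
  assumes "i \<le> n"
  shows "kraw n k (real i) = (\<Sum>l\<le>k. (-1)^l * real (i choose l) * real ((n - i) choose (k - l)))"
  unfolding kraw_def atLeast0AtMost using assms
  by (intro sum.cong) (simp_all add: binomial_gbinomial of_nat_diff)

lemma kraw_at_0: "kraw n k 0 = real (n choose k)"
  unfolding kraw_of_nat[of 0 n k, simplified] by (simp add: sum.atMost_shift sum.neutral)

lemma binomial_mult_swap: "(N choose a) * ((N - a) choose b) = (N choose b) * ((N - b) choose a)"
proof (cases "a + b \<le> N")
  case True
  have "(N choose (a + b)) * ((a + b) choose a) = (N choose a) * ((N - a) choose b)"
    "(N choose (a + b)) * ((a + b) choose b) = (N choose b) * ((N - b) choose a)"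
    using choose_mult[of a "a + b" N] choose_mult[of b "a + b" N] True by simp_all
  moreover have "(a + b) choose a = (a + b) choose b"
    using binomial_symmetric[of a "a + b"] by simp
  ultimately show ?thesis by simp
next
  case False
  then show ?thesis by (cases "a \<le> N"; cases "b \<le> N") (simp_all add: binomial_eq_0)
qed

lemma binomial_triple_swap:
  assumes "l \<le> i" "l \<le> j" "i \<le> n" "j \<le> n"
  shows "(n choose i) * (i choose l) * ((n - i) choose (j - l)) = (n choose j) * (j choose l) * ((n - j) choose (i - l))"
proof -
  have a: "(n choose i) * (i choose l) = (n choose l) * ((n - l) choose (i - l))" using choose_mult assms by simp
  have b: "(n choose j) * (j choose l) = (n choose l) * ((n - l) choose (j - l))" using choose_mult assms by simp
  have c: "((n - l) choose (i - l)) * ((n - l - (i - l)) choose (j - l)) = ((n - l) choose (j - l)) * ((n - l - (j - l)) choose (i - l))"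
    by (rule binomial_mult_swap)
  have d: "n - l - (i - l) = n - i" "n - l - (j - l) = n - j" using assms by auto
  show ?thesis unfolding a b using c unfolding d by (simp add: mult.assoc)
qed


lemma kraw_symmetric:
  assumes "i \<le> n" "j \<le> n"
  shows "real (n choose i) * kraw n j (real i) = real (n choose j) * kraw n i (real j)"
proof -
  define f where "f l = (-1::real)^l * real (i choose l) * real ((n - i) choose (j - l))" for l
  define g where "g l = (-1::real)^l * real (j choose l) * real ((n - j) choose (i - l))" for l
  have "kraw n j (real i) = (\<Sum>l\<le>j. f l)" unfolding f_def by (rule kraw_of_nat[OF assms(1)])
  also have "\<dots> = (\<Sum>l\<le>min i j. f l)"
    by (rule sum.mono_neutral_right) (auto simp: f_def)
  finally have f: "kraw n j (real i) = (\<Sum>l\<le>min i j. f l)" .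
  have "kraw n i (real j) = (\<Sum>l\<le>i. g l)" unfolding g_def by (rule kraw_of_nat[OF assms(2)])
  also have "\<dots> = (\<Sum>l\<le>min i j. g l)"
    by (rule sum.mono_neutral_right) (auto simp: g_def)
  finally have g: "kraw n i (real j) = (\<Sum>l\<le>min i j. g l)" .
  show ?thesis unfolding f g sum_distrib_left
  proof (rule sum.cong[OF refl])
    fix l assume "l \<in> {..min i j}"
    then have l: "l \<le> i" "l \<le> j" by auto
    have "real (n choose i) * (real (i choose l) * real ((n - i) choose (j - l)))
        = real (n choose j) * (real (j choose l) * real ((n - j) choose (i - l)))"
      using binomial_triple_swap[OF l assms] by (metis of_nat_mult mult.assoc)
    then show "real (n choose i) * f l = real (n choose j) * g l"
      unfolding f_def g_def by (simp add: algebra_simps)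
  qed
qed

lemma kraw_reflect:
  assumes "i \<le> n"
  shows "kraw n j (real (n - i)) = (-1)^j * kraw n j (real i)"
proof -
  have "kraw n j (real (n - i)) = (\<Sum>l=0..j. (-1)^l * real ((n - i) choose l) * real (i choose (j - l)))"
    using kraw_of_nat[of "n - i" n j] assms by (simp add: atLeast0AtMost)
  also have "\<dots> = (\<Sum>l=0..j. (-1)^(j - l) * real ((n - i) choose (j - l)) * real (i choose (j - (j - l))))"
    by (subst sum.atLeastAtMost_rev) simp
  also have "\<dots> = (\<Sum>l=0..j. (-1)^j * ((-1)^l * real (i choose l) * real ((n - i) choose (j - l))))"
  proof (rule sum.cong[OF refl])
    fix l assume "l \<in> {0..j}"
    then have l: "l \<le> j" by simp
    have "(-1::real)^j = (-1)^(j - l) * (-1)^l"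
      using l by (simp add: power_add[symmetric])
    then have "(-1::real)^(j - l) = (-1)^j * (-1)^l"
      by (metis minus_one_mult_self mult.assoc mult.right_neutral)
    then show "(-1)^(j - l) * real ((n - i) choose (j - l)) * real (i choose (j - (j - l)))
        = (-1)^j * ((-1)^l * real (i choose l) * real ((n - i) choose (j - l)))"
      using l by simp
  qed
  also have "\<dots> = (-1)^j * kraw n j (real i)"
    using kraw_of_nat[OF assms, of j] by (simp add: sum_distrib_left atLeast0AtMost)
  finally show ?thesis .
qed


definition kraw_norm :: "nat \<Rightarrow> nat \<Rightarrow> real \<Rightarrow> real" where
  "kraw_norm n k x = kraw n k x / real (n choose k)"

lemma kraw_norm_symmetric:
  assumes "i \<le> n" "j \<le> n"
  shows "kraw_norm n j (real i) = kraw_norm n i (real j)"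
  using kraw_symmetric[OF assms] assms by (simp add: kraw_norm_def field_simps)

lemma kraw_norm_reflect:
  assumes "i \<le> n"
  shows "kraw_norm n j (real (n - i)) = (-1)^j * kraw_norm n j (real i)"
  by (simp add: kraw_norm_def kraw_reflect[OF assms])

lemma kraw_norm_at_0: "k \<le> n \<Longrightarrow> kraw_norm n k 0 = 1"
  by (simp add: kraw_norm_def kraw_at_0)

lemma kraw_norm_eq_sum_hypergeom:
  assumes "j \<le> n"
  shows "kraw_norm n t (real j) = (\<Sum>h\<le>t. (-1)^h * hypergeom n j t h)"
  unfolding kraw_norm_def kraw_of_nat[OF assms] hypergeom_def
  by (simp add: sum_divide_distrib mult.assoc)

lemma kraw_norm_degree_0: "kraw_norm n 0 x = 1"
  by (simp add: kraw_norm_def kraw_def)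


lemma kraw_norm_degree_1:
  assumes "j \<le> n" "0 < n"
  shows "kraw_norm n 1 (real j) = (real n - 2 * real j) / real n"
  using assms by (simp add: kraw_norm_def kraw_of_nat of_nat_diff field_simps)

lemma kraw_norm_degree_2:
  assumes "j \<le> n" "2 \<le> n"
  shows "kraw_norm n 2 (real j) = ((real n - 2 * real j)^2 - real n) / (real n * (real n - 1))"
proof -
  have choose_2: "real (m choose Suc (Suc 0)) = real m * (real m - 1) / 2" for m
    using Suc_times_choose_Suc_real[of 1 m] by (simp add: field_simps)
  show ?thesis
    using assms
    by (simp add: kraw_norm_def kraw_of_nat numeral_2_eq_2 choose_2 of_nat_diff field_simps power2_eq_square)
qed

lemma kraw_norm_Suc:
  assumes "j \<le> n" "t < n"
  shows "kraw_norm n (Suc t) (real j) = (1 - 2 * real j / real n) * kraw_norm n t (real j)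
    + 2 / (real n - real t) * (\<Sum>h\<le>t. (-1)^h * hypergeom n j t h * (real h - real t * real j / real n))"
proof -
  define W where "W h = real (j choose h) * real ((n - j) choose (t - h))" for h
  have C: "real (n choose t) > 0" and nt: "real n - real t > 0" using assms(2) by auto
  have n: "real n > 0" and m: "real (n - j) = real n - real j" using assms by (auto simp: of_nat_diff)
  have "(real t + 1) * kraw n (Suc t) (real j) = (\<Sum>h\<le>t. (-1)^h * W h * (real (n - j) - real t + 2 * real h - real j))"
    unfolding kraw_of_nat[OF assms(1)] W_def
    using alternating_convolution_Suc[where t=t and j=j and m="n - j"] by (simp add: mult.assoc)
  moreover have "real (Suc t) * real (n choose Suc t) = (real n - real t) * real (n choose t)"
    by (rule Suc_times_choose_Suc_real)
  ultimately have "kraw_norm n (Suc t) (real j)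
      = (\<Sum>h\<le>t. (-1)^h * W h * (real (n - j) - real t + 2 * real h - real j)) / ((real n - real t) * real (n choose t))"
    unfolding kraw_norm_def by (metis add.commute nonzero_mult_divide_mult_cancel_left of_nat_Suc of_nat_neq_0)
  also have "\<dots> = (\<Sum>h\<le>t. (-1)^h * hypergeom n j t h * ((1 - 2 * real j / real n) + 2 / (real n - real t) * (real h - real t * real j / real n)))"
    unfolding sum_divide_distrib hypergeom_def W_def[symmetric] m
    by (rule sum.cong[OF refl]) (use n nt C in \<open>simp add: field_simps\<close>)
  also have "\<dots> = (1 - 2 * real j / real n) * kraw_norm n t (real j)
      + 2 / (real n - real t) * (\<Sum>h\<le>t. (-1)^h * hypergeom n j t h * (real h - real t * real j / real n))"
  proof -
    have sum_affine: "(\<Sum>h\<le>t. F h * (a + b * g h)) = a * (\<Sum>h\<le>t. F h) + b * (\<Sum>h\<le>t. F h * g h)"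
      for F g :: "nat \<Rightarrow> real" and a b
      by (simp add: sum.distrib sum_distrib_left algebra_simps)
    show ?thesis unfolding sum_affine kraw_norm_eq_sum_hypergeom[OF assms(1)] ..
  qed
  finally show ?thesis .
qed

lemma abs_le_amgm: "(s::real) > 0 \<Longrightarrow> \<bar>x\<bar> \<le> (x^2 / s + s) / 2"
proof -
  assume s: "s > 0"
  have "0 \<le> (\<bar>x\<bar> - s)^2" by simp
  then have "2 * s * \<bar>x\<bar> \<le> x^2 + s^2" by (simp add: power2_eq_square algebra_simps)
  then show ?thesis using s by (simp add: field_simps power2_eq_square)
qed

text \<open>AM-GM with \<open>s = \<surd>n\<close> turns the variance bound \<open>t \<le> n\<close> into a first absolute
  moment bound of order \<open>\<surd>n\<close>.\<close>
lemma kraw_norm_Suc_abs_le: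
  assumes j: "j \<le> n" and n: "2 \<le> n" and t: "2 * t < n"
  shows "\<bar>kraw_norm n (Suc t) (real j)\<bar> \<le> \<bar>1 - 2 * real j / real n\<bar> * \<bar>kraw_norm n t (real j)\<bar> + 4 / sqrt (real n)"
proof -
  define w where "w = hypergeom n j t"
  define \<mu> where "\<mu> = real t * real j / real n"
  define s where "s = sqrt (real n)"
  have s: "s > 0" "s * s = real n" unfolding s_def using n by auto
  have "2 * real t < real n" using t by linarith
  then have nt: "real n - real t > 0" "2 * s * s \<le> 4 * (real n - real t)" using s(2) by (simp_all add: mult.assoc)
  have "\<bar>\<Sum>h\<le>t. (-1)^h * w h * (real h - \<mu>)\<bar> \<le> (\<Sum>h\<le>t. w h * \<bar>real h - \<mu>\<bar>)"
    using sum_abs[of "\<lambda>h. (-1)^h * w h * (real h - \<mu>)" "{..t}"]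
    by (simp add: abs_mult w_def hypergeom_nonneg)
  also have "\<dots> \<le> (\<Sum>h\<le>t. w h * (((real h - \<mu>)^2 / s + s) / 2))"
    by (intro sum_mono mult_left_mono abs_le_amgm s) (simp add: w_def hypergeom_nonneg)
  also have "\<dots> = ((\<Sum>h\<le>t. w h * (real h - \<mu>)^2) / s + s * (\<Sum>h\<le>t. w h)) / 2"
    by (simp add: sum_distrib_left sum_divide_distrib sum.distrib[symmetric] algebra_simps add_divide_distrib)
  also have "\<dots> \<le> (real t / s + s) / 2"
    using hypergeom_variance_le[OF j _ n, of t] sum_hypergeom[OF j, of t] t s
    by (simp add: w_def \<mu>_def divide_right_mono)
  also have "\<dots> \<le> s"
    using t s by (simp add: field_simps)
  finally have dev: "\<bar>\<Sum>h\<le>t. (-1)^h * w h * (real h - \<mu>)\<bar> \<le> s" .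
  define B where "B = 2 / (real n - real t) * (\<Sum>h\<le>t. (-1)^h * w h * (real h - \<mu>))"
  have "\<bar>B\<bar> \<le> 2 / (real n - real t) * s"
    unfolding B_def using mult_left_mono[OF dev, of "2 / (real n - real t)"] nt by (simp add: abs_mult)
  also have "\<dots> \<le> 4 / sqrt (real n)"
    using s nt by (simp add: s_def[symmetric] field_simps)
  finally have B: "\<bar>B\<bar> \<le> 4 / sqrt (real n)" .
  have "kraw_norm n (Suc t) (real j) = (1 - 2 * real j / real n) * kraw_norm n t (real j) + B"
    unfolding B_def w_def \<mu>_def by (rule kraw_norm_Suc[OF j]) (use t in simp)
  then show ?thesis
    using B abs_triangle_ineq[of "(1 - 2 * real j / real n) * kraw_norm n t (real j)" B]
    by (simp add: abs_mult)
qed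

lemma kraw_norm_abs_le:
  assumes j: "j \<le> n" and n: "2 \<le> n" and d: "\<bar>1 - 2 * real j / real n\<bar> < 1" and t: "2 * t \<le> n"
  shows "\<bar>kraw_norm n t (real j)\<bar>
    \<le> \<bar>1 - 2 * real j / real n\<bar> ^ min t 3 + (4 / sqrt (real n)) / (1 - \<bar>1 - 2 * real j / real n\<bar>)"
  using t
proof (induction t)
  case 0
  then show ?case using d by (simp add: kraw_norm_degree_0)
next
  case (Suc t)
  define d where "d = \<bar>1 - 2 * real j / real n\<bar>"
  define e where "e = 4 / sqrt (real n)"
  have d0: "0 \<le> d" "d < 1" unfolding d_def using assms(3) by auto
  have IH: "\<bar>kraw_norm n t (real j)\<bar> \<le> d ^ min t 3 + e / (1 - d)"
    using Suc by (simp add: d_def e_def)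
  have "\<bar>kraw_norm n (Suc t) (real j)\<bar> \<le> d * \<bar>kraw_norm n t (real j)\<bar> + e"
    using kraw_norm_Suc_abs_le[OF j n] Suc.prems unfolding d_def e_def by simp
  also have "\<dots> \<le> d * (d ^ min t 3 + e / (1 - d)) + e"
    using IH d0 by (simp add: mult_left_mono)
  also have "\<dots> = d ^ Suc (min t 3) + e / (1 - d)"
    using d0 by (simp add: field_simps)
  also have "d ^ Suc (min t 3) \<le> d ^ min (Suc t) 3"
    by (rule power_decreasing) (use d0 in auto)
  finally show ?case unfolding d_def e_def by simp
qed

definition kraw_middle_bound :: "nat \<Rightarrow> nat \<Rightarrow> real" where
  "kraw_middle_bound n j = \<bar>1 - 2 * real j / real n\<bar> ^ 3 + (4 / sqrt (real n)) / (1 - \<bar>1 - 2 * real j / real n\<bar>)"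

lemma kraw_norm_abs_le_middle:
  assumes "0 < j" "j < n" "3 \<le> i" "i + 3 \<le> n"
  shows "\<bar>kraw_norm n j (real i)\<bar> \<le> kraw_middle_bound n j"
proof -
  have j: "j \<le> n" and n: "2 \<le> n" using assms by auto
  have d: "\<bar>1 - 2 * real j / real n\<bar> < 1" using assms(1,2) by (auto simp: abs_less_iff field_simps)
  have bound: "\<bar>kraw_norm n j (real i')\<bar> \<le> kraw_middle_bound n j" if "3 \<le> i'" "2 * i' \<le> n" for i'
    using kraw_norm_abs_le[OF j n d that(2)] kraw_norm_symmetric[of i' n j] that j
    by (simp add: kraw_middle_bound_def)
  show ?thesis
  proof (cases "2 * i \<le> n")
    case True
    then show ?thesis using bound assms(3) by simp
  next
    case False
    then have "kraw_norm n j (real i) = (-1)^j * kraw_norm n j (real (n - i))"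
      using kraw_norm_reflect[of "n - i" n j] assms(4) by simp
    moreover have "\<bar>kraw_norm n j (real (n - i))\<bar> \<le> kraw_middle_bound n j"
      by (rule bound) (use False assms(4) in auto)
    ultimately show ?thesis by (simp add: abs_mult)
  qed
qed

lemma lp_constraint_two_point:
  fixes x :: "nat \<Rightarrow> real"
  assumes k: "1 \<le> k" "k + 1 \<le> n"
    and x_k: "x k = c0 / real (n choose k)" and x_Suc_k: "x (k + 1) = c1 / real (n choose (k + 1))"
    and x_0: "\<And>m. m \<noteq> k \<Longrightarrow> m \<noteq> k + 1 \<Longrightarrow> x m = 0"
  shows "(\<Sum>m=1..n. (kraw n m 1 - kraw n m y) * x m)
    = c0 * (kraw_norm n k 1 - kraw_norm n k y) + c1 * (kraw_norm n (k + 1) 1 - kraw_norm n (k + 1) y)"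
proof -
  have "(\<Sum>m=1..n. (kraw n m 1 - kraw n m y) * x m) = (\<Sum>m\<in>{k, k + 1}. (kraw n m 1 - kraw n m y) * x m)"
    by (rule sum.mono_neutral_right) (use k x_0 in auto)
  also have "\<dots> = c0 * (kraw_norm n k 1 - kraw_norm n k y) + c1 * (kraw_norm n (k + 1) 1 - kraw_norm n (k + 1) y)"
    using k by (simp add: x_k x_Suc_k[simplified] kraw_norm_def field_simps)
  finally show ?thesis .
qed

lemma lp_feasible_two_point:
  fixes x :: "nat \<Rightarrow> real"
  assumes k: "2 \<le> k" "k + 3 \<le> n" "even k"
    and x_k: "x k = c0 / real (n choose k)" and x_Suc_k: "x (k + 1) = c1 / real (n choose (k + 1))"
    and x_0: "\<And>m. m \<noteq> k \<Longrightarrow> m \<noteq> k + 1 \<Longrightarrow> x m = 0"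
    and c: "0 \<le> c0" "0 \<le> c1"
    and at_2: "c0 * (kraw_norm n k 1 - kraw_norm n k 2) + c1 * (kraw_norm n (k + 1) 1 - kraw_norm n (k + 1) 2) \<ge> -1"
    and at_n: "c0 * (kraw_norm n k 1 - 1) + c1 * (kraw_norm n (k + 1) 1 + 1) \<ge> -1"
    and at_n_1: "c1 * (2 * kraw_norm n (k + 1) 1) \<ge> -1"
    and at_n_2: "c0 * (kraw_norm n k 1 - kraw_norm n k 2) + c1 * (kraw_norm n (k + 1) 1 + kraw_norm n (k + 1) 2) \<ge> -1"
    and middle: "c0 * kraw_norm n k 1 + c1 * kraw_norm n (k + 1) 1
      - c0 * kraw_middle_bound n k - c1 * kraw_middle_bound n (k + 1) \<ge> -1"
  shows "lp_feasible n x"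
  unfolding lp_feasible_def
proof (intro conjI ballI)
  fix m assume "m \<in> {1..n}"
  show "x m \<ge> 0"
    using c x_0[of m] x_k x_Suc_k by (cases "m = k"; cases "m = k + 1") auto
next
  fix i assume "i \<in> {2..n}"
  then have i: "2 \<le> i" "i \<le> n" by auto
  define E where "E j y = kraw_norm n j y" for j y
  have reflect: "E j (real (n - i')) = (-1)^j * E j (real i')" if "i' \<le> n" for j i'
    unfolding E_def by (rule kraw_norm_reflect[OF that])
  have parity: "(-1::real)^k = 1" "(-1::real)^(k + 1) = -1" using k(3) by simp_all
  \<comment> \<open>near \<open>i = n\<close> reflection reduces to the exact values at \<open>0, 1, 2\<close>; elsewhere the middle bound applies\<close>
  consider "i = 2" | "i = n" | "i = n - 1" | "i = n - 2" | "3 \<le> i \<and> i + 3 \<le> n"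
    using i k by linarith
  then have "c0 * (E k 1 - E k i) + c1 * (E (k + 1) 1 - E (k + 1) i) \<ge> -1"
  proof cases
    case 1
    then show ?thesis using at_2 by (simp add: E_def)
  next
    case 2
    then have "E k i = 1" "E (k + 1) i = -1"
      using reflect[of 0] parity k by (simp_all add: E_def kraw_norm_at_0)
    then show ?thesis using at_n by (simp add: E_def)
  next
    case 3
    then have "E k i = E k 1" "E (k + 1) i = - E (k + 1) 1"
      using reflect[of 1] parity k by simp_all
    then show ?thesis using at_n_1 by (simp add: E_def algebra_simps)
  next
    case 4
    then have "E k i = E k 2" "E (k + 1) i = - E (k + 1) 2"
      using reflect[of 2] parity k by simp_all
    then show ?thesis using at_n_2 by (simp add: E_def algebra_simps)
  next
    case 5
    then have "\<bar>E k i\<bar> \<le> kraw_middle_bound n k" "\<bar>E (k + 1) i\<bar> \<le> kraw_middle_bound n (k + 1)"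
      unfolding E_def using k by (auto intro!: kraw_norm_abs_le_middle)
    then have "c0 * E k i \<le> c0 * kraw_middle_bound n k" "c1 * E (k + 1) i \<le> c1 * kraw_middle_bound n (k + 1)"
      using c by (auto intro: mult_left_mono dest: abs_le_D1)
    then show ?thesis using middle by (simp add: E_def algebra_simps)
  qed
  moreover have "(\<Sum>m=1..n. (kraw n m 1 - kraw n m (real i)) * x m)
      = c0 * (E k 1 - E k i) + c1 * (E (k + 1) 1 - E (k + 1) i)"
    unfolding E_def by (rule lp_constraint_two_point[OF _ _ x_k x_Suc_k x_0]) (use k in auto)
  ultimately show "(\<Sum>m=1..n. (kraw n m 1 - kraw n m (real i)) * x m) \<ge> -1"
    by simp
qed

lemma kraw_norm_at_1:
  assumes "j \<le> n" "0 < n"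
  shows "kraw_norm n j 1 = 1 - 2 * (real j / real n)"
  using kraw_norm_symmetric[of 1 n j] kraw_norm_degree_1[OF assms] assms by (simp add: field_simps)

lemma kraw_norm_at_2:
  assumes "j \<le> n" "2 \<le> n"
  shows "kraw_norm n j 2 = ((1 - 2 * (real j / real n))^2 - 1 / real n) / (1 - 1 / real n)"
proof -
  have "kraw_norm n j 2 = kraw_norm n 2 (real j)"
    using kraw_norm_symmetric[of 2 n j] assms by simp
  also have "\<dots> = ((real n - 2 * real j)^2 - real n) / (real n * (real n - 1))"
    by (rule kraw_norm_degree_2[OF assms])
  also have "\<dots> = ((1 - 2 * (real j / real n))^2 - 1 / real n) / (1 - 1 / real n)"
    using assms(2) by (simp add: field_simps power2_eq_square)
  finally show ?thesis .
qed

definition xstar_weight0 :: "real \<Rightarrow> real \<Rightarrow> real" where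
  "xstar_weight0 r t = (1 + 2 * (r + t)^2 - 2 * (r + t) - t) / (2 * r * (2 * r - 1 + t * (2 * r + 2 * t - 1)))"

definition xstar_weight1 :: "real \<Rightarrow> real \<Rightarrow> real" where
  "xstar_weight1 r t = (1 - r) / (2 * r - 1 + t * (2 * r + 2 * t - 1))"

lemma xstar_eq:
  "xstar \<beta> n m =
    (if m = kidx \<beta> n then xstar_weight0 (real (kidx \<beta> n) / real n) (1 / real n) / real (n choose kidx \<beta> n)
     else if m = kidx \<beta> n + 1 then xstar_weight1 (real (kidx \<beta> n) / real n) (1 / real n) / real (n choose (kidx \<beta> n + 1))
     else 0)"
  unfolding xstar_def xstar_weight0_def xstar_weight1_def Let_def
  by (simp add: divide_divide_eq_left mult_ac)

lemma xstar_weights_tight_n: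
  fixes r t :: real
  assumes "r \<noteq> 0" "2 * r - 1 + t * (2 * r + 2 * t - 1) \<noteq> 0"
  shows "xstar_weight0 r t * ((1 - 2 * r) - 1) + xstar_weight1 r t * ((1 - 2 * (r + t)) + 1) = -1"
proof -
  define D where "D = 2 * r - 1 + t * (2 * r + 2 * t - 1)"
  define P where "P = 1 + 2 * (r + t)^2 - 2 * (r + t) - t"
  have nonzero: "2 * r * D \<noteq> 0" using assms by (simp add: D_def)
  have "xstar_weight0 r t * ((1 - 2 * r) - 1) = - P / D"
    using nonzero unfolding xstar_weight0_def D_def[symmetric] P_def[symmetric] by (simp add: field_simps)
  moreover have "xstar_weight1 r t * ((1 - 2 * (r + t)) + 1) = (1 - r) * (2 - 2 * r - 2 * t) / D"
    unfolding xstar_weight1_def D_def[symmetric] by simp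
  moreover have "- P + (1 - r) * (2 - 2 * r - 2 * t) = - D"
    unfolding P_def D_def by (simp add: algebra_simps power2_eq_square)
  ultimately show ?thesis
    using nonzero by (simp add: diff_divide_distrib[symmetric])
qed

lemma xstar_weights_tight_2:
  fixes r t :: real
  assumes "r \<noteq> 0" "t \<noteq> 1" "2 * r - 1 + t * (2 * r + 2 * t - 1) \<noteq> 0"
  shows "xstar_weight0 r t * ((1 - 2 * r) - ((1 - 2 * r)^2 - t) / (1 - t))
    + xstar_weight1 r t * ((1 - 2 * (r + t)) - ((1 - 2 * (r + t))^2 - t) / (1 - t)) = -1"
proof -
  define D where "D = 2 * r - 1 + t * (2 * r + 2 * t - 1)"
  define P where "P = 1 + 2 * (r + t)^2 - 2 * (r + t) - t"
  define A0 where "A0 = (1 - 2 * r) * (1 - t) - ((1 - 2 * r)^2 - t)"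
  define A1 where "A1 = (1 - 2 * (r + t)) * (1 - t) - ((1 - 2 * (r + t))^2 - t)"
  have nonzero: "2 * r * D \<noteq> 0" "1 - t \<noteq> 0" using assms by (simp_all add: D_def)
  have A: "(1 - 2 * r) - ((1 - 2 * r)^2 - t) / (1 - t) = A0 / (1 - t)"
    "(1 - 2 * (r + t)) - ((1 - 2 * (r + t))^2 - t) / (1 - t) = A1 / (1 - t)"
    using nonzero by (simp_all add: A0_def A1_def field_simps)
  have w0: "xstar_weight0 r t * (A0 / (1 - t)) = P * A0 / (2 * r * D * (1 - t))"
    unfolding xstar_weight0_def D_def[symmetric] P_def[symmetric] by simp
  have w1: "xstar_weight1 r t * (A1 / (1 - t)) = 2 * r * (1 - r) * A1 / (2 * r * D * (1 - t))"
    using nonzero unfolding xstar_weight1_def D_def[symmetric] by simp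
  have "xstar_weight0 r t * ((1 - 2 * r) - ((1 - 2 * r)^2 - t) / (1 - t))
      + xstar_weight1 r t * ((1 - 2 * (r + t)) - ((1 - 2 * (r + t))^2 - t) / (1 - t))
      = (P * A0 + 2 * r * (1 - r) * A1) / (2 * r * D * (1 - t))"
    unfolding A w0 w1 by (rule add_divide_distrib[symmetric])
  also have "P * A0 + 2 * r * (1 - r) * A1 = - (2 * r * D * (1 - t))"
    unfolding P_def D_def A0_def A1_def by (simp add: algebra_simps power2_eq_square)
  finally show ?thesis
    using nonzero by simp
qed

lemma even_kidx: "even (kidx \<beta> n)"
  by (simp add: kidx_def nat_mult_distrib)

lemma lp_feasible_xstar:
  fixes \<beta> :: real and n :: nat
  assumes k_def: "k = kidx \<beta> n" and r_def: "r = real k / real n" and t_def: "t = 1 / real n"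
    and k: "2 \<le> k" "k + 3 \<le> n"
    and D: "2 * r - 1 + t * (2 * r + 2 * t - 1) \<noteq> 0"
    and c: "0 \<le> xstar_weight0 r t" "0 \<le> xstar_weight1 r t"
    and at_n_1: "xstar_weight1 r t * (2 * (1 - 2 * (r + t))) \<ge> -1"
    and at_n_2: "xstar_weight0 r t * ((1 - 2 * r) - ((1 - 2 * r)^2 - t) / (1 - t))
      + xstar_weight1 r t * ((1 - 2 * (r + t)) + ((1 - 2 * (r + t))^2 - t) / (1 - t)) \<ge> -1"
    and middle: "xstar_weight0 r t * (1 - 2 * r) + xstar_weight1 r t * (1 - 2 * (r + t))
      - xstar_weight0 r t * kraw_middle_bound n k - xstar_weight1 r t * kraw_middle_bound n (k + 1) \<ge> -1"
  shows "lp_feasible n (xstar \<beta> n)"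
proof -
  have n: "2 \<le> n" using k by simp
  have r: "r \<noteq> 0" "real (k + 1) / real n = r + t"
    unfolding r_def t_def using k by (auto simp: add_divide_distrib)
  have t: "t \<noteq> 1" unfolding t_def using n by simp
  have "kraw_norm n k 1 = 1 - 2 * (real k / real n)" "kraw_norm n (k + 1) 1 = 1 - 2 * (real (k + 1) / real n)"
    using kraw_norm_at_1[of k n] kraw_norm_at_1[of "k + 1" n] k by simp_all
  then have at_1: "kraw_norm n k 1 = 1 - 2 * r" "kraw_norm n (k + 1) 1 = 1 - 2 * (r + t)"
    unfolding r(2) r_def by simp_all
  have "kraw_norm n k 2 = ((1 - 2 * (real k / real n))^2 - 1 / real n) / (1 - 1 / real n)"
      "kraw_norm n (k + 1) 2 = ((1 - 2 * (real (k + 1) / real n))^2 - 1 / real n) / (1 - 1 / real n)"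
    using kraw_norm_at_2[of k n] kraw_norm_at_2[of "k + 1" n] k by simp_all
  then have at_2: "kraw_norm n k 2 = ((1 - 2 * r)^2 - t) / (1 - t)"
      "kraw_norm n (k + 1) 2 = ((1 - 2 * (r + t))^2 - t) / (1 - t)"
    unfolding r(2) r_def t_def by simp_all
  show ?thesis
  proof (rule lp_feasible_two_point[OF k even_kidx[of \<beta> n, folded k_def]])
    show "xstar \<beta> n k = xstar_weight0 r t / real (n choose k)"
      "xstar \<beta> n (k + 1) = xstar_weight1 r t / real (n choose (k + 1))"
      "\<And>m. m \<noteq> k \<Longrightarrow> m \<noteq> k + 1 \<Longrightarrow> xstar \<beta> n m = 0"
      by (simp_all add: xstar_eq k_def r_def t_def)
  qed (use c at_n_1 at_n_2 middle xstar_weights_tight_n[OF r(1) D] xstar_weights_tight_2[OF r(1) t D]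
      in \<open>simp_all add: at_1[simplified] at_2[simplified]\<close>)
qed

lemma lp_objective_xstar:
  fixes \<beta> a :: real and n :: nat
  assumes k_def: "k = kidx \<beta> n" and r_def: "r = real k / real n" and t_def: "t = 1 / real n"
    and k: "1 \<le> k" "k + 1 \<le> n"
  shows "lp_objective n a (xstar \<beta> n) = - (xstar_weight0 r t * (1 + (1 - 2 * r) * (1 / a - 1))
    + xstar_weight1 r t * (1 + (1 - 2 * (r + t)) * (1 / a - 1)))"
proof -
  have summand: "(kraw n j 0 + kraw n j 1 * (1 / a - 1)) * (w / real (n choose j))
      = w * (1 + (1 - 2 * (real j / real n)) * (1 / a - 1))" if "j \<le> n" for j w
  proof -
    have kraw_1: "kraw n j 1 = real (n choose j) * (1 - 2 * (real j / real n))"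
      using kraw_norm_at_1[OF that] k that by (simp add: kraw_norm_def field_simps)
    show ?thesis using that by (simp add: kraw_at_0 kraw_1 field_simps)
  qed
  have "lp_objective n a (xstar \<beta> n)
      = - (\<Sum>m\<in>{k, k + 1}. (kraw n m 0 + kraw n m 1 * (1 / a - 1)) * xstar \<beta> n m)"
    unfolding lp_objective_def
    by (subst sum.mono_neutral_right[of "{1..n}" "{k, k + 1}"]) (use k in \<open>auto simp: xstar_eq k_def\<close>)
  also have "\<dots> = - (xstar_weight0 r t * (1 + (1 - 2 * (real k / real n)) * (1 / a - 1))
      + xstar_weight1 r t * (1 + (1 - 2 * (real (k + 1) / real n)) * (1 / a - 1)))"
    using summand[of k] summand[of "k + 1"] k by (simp add: xstar_eq k_def r_def t_def)
  also have "real (k + 1) / real n = r + t"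
    unfolding r_def t_def by (simp add: add_divide_distrib)
  finally show ?thesis unfolding r_def .
qed

lemma kidx_bounds:
  assumes "0 \<le> \<beta>"
  shows "real (kidx \<beta> n) \<le> \<beta> * real n" "\<beta> * real n - 2 < real (kidx \<beta> n)"
proof -
  define f where "f = \<lfloor>\<beta> * real n / 2\<rfloor>"
  have "f \<ge> 0" unfolding f_def using assms by simp
  then have k: "real (kidx \<beta> n) = 2 * real_of_int f"
    unfolding kidx_def f_def[symmetric] by simp
  have "real_of_int f \<le> \<beta> * real n / 2" "\<beta> * real n / 2 < real_of_int f + 1"
    unfolding f_def by linarith+
  then show "real (kidx \<beta> n) \<le> \<beta> * real n" "\<beta> * real n - 2 < real (kidx \<beta> n)"
    unfolding k by linarith+
qed

lemma kidx_ratio_tendsto: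
  assumes "0 \<le> \<beta>"
  shows "(\<lambda>n. real (kidx \<beta> n) / real n) \<longlonglongrightarrow> \<beta>"
proof (rule real_tendsto_sandwich)
  show "\<forall>\<^sub>F n in sequentially. \<beta> - 2 / real n \<le> real (kidx \<beta> n) / real n"
    using eventually_gt_at_top[of 0]
  proof eventually_elim
    case (elim n)
    have "\<beta> - 2 / real n = (\<beta> * real n - 2) / real n" using elim by (simp add: field_simps)
    also have "\<dots> \<le> real (kidx \<beta> n) / real n"
      using kidx_bounds(2)[OF assms, of n] by (intro divide_right_mono) simp_all
    finally show ?case .
  qed
  show "\<forall>\<^sub>F n in sequentially. real (kidx \<beta> n) / real n \<le> \<beta>"
    using eventually_gt_at_top[of 0]
  proof eventually_elim
    case (elim n)
    then show ?case using kidx_bounds(1)[OF assms, of n] by (simp add: field_simps)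
  qed
  show "(\<lambda>n. \<beta> - 2 / real n) \<longlonglongrightarrow> \<beta>"
    using tendsto_diff[OF tendsto_const lim_const_over_n[of 2]] by simp
qed simp

lemma kidx_eventually_inside:
  assumes "0 < \<beta>" "\<beta> < 1"
  shows "\<forall>\<^sub>F n in sequentially. 2 \<le> kidx \<beta> n \<and> kidx \<beta> n + 3 \<le> n"
proof -
  have "\<forall>\<^sub>F n in sequentially. 4 / \<beta> \<le> real n \<and> 3 / (1 - \<beta>) \<le> real n"
    using filterlim_real_sequentially unfolding filterlim_at_top by (simp add: eventually_conj)
  then show ?thesis
  proof eventually_elim
    case (elim n)
    then have "4 \<le> \<beta> * real n" "3 \<le> (1 - \<beta>) * real n" using assms by (simp_all add: field_simps)
    then show ?case using kidx_bounds[of \<beta> n] assms by (simp add: algebra_simps)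
  qed
qed

lemma kraw_middle_bound_tendsto:
  assumes j: "(\<lambda>n. real (j n) / real n) \<longlonglongrightarrow> \<rho>" and \<rho>: "\<bar>1 - 2 * \<rho>\<bar> < 1"
  shows "(\<lambda>n. kraw_middle_bound n (j n)) \<longlonglongrightarrow> \<bar>1 - 2 * \<rho>\<bar> ^ 3"
proof -
  have "filterlim (\<lambda>n. sqrt (real n)) at_top sequentially"
    by (rule filterlim_compose[OF sqrt_at_top filterlim_real_sequentially])
  then have "(\<lambda>n. 4 * inverse (sqrt (real n))) \<longlonglongrightarrow> 4 * 0"
    by (intro tendsto_mult tendsto_const tendsto_inverse_0_at_top)
  then have "(\<lambda>n. \<bar>1 - 2 * (real (j n) / real n)\<bar> ^ 3 + 4 * inverse (sqrt (real n)) / (1 - \<bar>1 - 2 * (real (j n) / real n)\<bar>))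
      \<longlonglongrightarrow> \<bar>1 - 2 * \<rho>\<bar> ^ 3 + 4 * 0 / (1 - \<bar>1 - 2 * \<rho>\<bar>)"
    using \<rho> by (intro tendsto_intros j) simp_all
  then show ?thesis
    by (simp add: kraw_middle_bound_def divide_inverse mult.assoc)
qed

lemma xstar_weights_tendsto:
  assumes r: "r \<longlonglongrightarrow> \<beta>" and t: "t \<longlonglongrightarrow> 0" and \<beta>: "1/2 < \<beta>"
  shows "(\<lambda>n. xstar_weight0 (r n) (t n)) \<longlonglongrightarrow> xstar_weight0 \<beta> 0"
    and "(\<lambda>n. xstar_weight1 (r n) (t n)) \<longlonglongrightarrow> xstar_weight1 \<beta> 0"
proof -
  have D: "(\<lambda>n. 2 * r n - 1 + t n * (2 * r n + 2 * t n - 1)) \<longlonglongrightarrow> 2 * \<beta> - 1 + 0 * (2 * \<beta> + 2 * 0 - 1)"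
    by (intro tendsto_intros r t)
  have "(\<lambda>n. xstar_weight0 (r n) (t n))
      \<longlonglongrightarrow> (1 + 2 * (\<beta> + 0)^2 - 2 * (\<beta> + 0) - 0) / (2 * \<beta> * (2 * \<beta> - 1 + 0 * (2 * \<beta> + 2 * 0 - 1)))"
    unfolding xstar_weight0_def using \<beta> by (intro tendsto_intros r t D) simp
  then show "(\<lambda>n. xstar_weight0 (r n) (t n)) \<longlonglongrightarrow> xstar_weight0 \<beta> 0"
    by (simp add: xstar_weight0_def)
  have "(\<lambda>n. xstar_weight1 (r n) (t n)) \<longlonglongrightarrow> (1 - \<beta>) / (2 * \<beta> - 1 + 0 * (2 * \<beta> + 2 * 0 - 1))"
    unfolding xstar_weight1_def using \<beta> by (intro tendsto_intros r t D) simp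
  then show "(\<lambda>n. xstar_weight1 (r n) (t n)) \<longlonglongrightarrow> xstar_weight1 \<beta> 0"
    by (simp add: xstar_weight1_def)
qed

lemma xstar_weights_limit:
  fixes \<beta> :: real
  assumes \<beta>: "1/2 < \<beta>" "\<beta> < 1"
  shows "xstar_weight0 \<beta> 0 = (\<beta>^2 + (1 - \<beta>)^2) / (2 * \<beta> * (2 * \<beta> - 1))"
    and "xstar_weight1 \<beta> 0 = (1 - \<beta>) / (2 * \<beta> - 1)"
    and "0 < xstar_weight0 \<beta> 0" "0 < xstar_weight1 \<beta> 0"
    and "xstar_weight0 \<beta> 0 + xstar_weight1 \<beta> 0 = 1 / (2 * \<beta> * (2 * \<beta> - 1))"
proof -
  show c0: "xstar_weight0 \<beta> 0 = (\<beta>^2 + (1 - \<beta>)^2) / (2 * \<beta> * (2 * \<beta> - 1))"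
    and c1: "xstar_weight1 \<beta> 0 = (1 - \<beta>) / (2 * \<beta> - 1)"
    unfolding xstar_weight0_def xstar_weight1_def by (simp_all add: power2_eq_square algebra_simps)
  have "\<beta>^2 + (1 - \<beta>)^2 > 0" using \<beta> by (simp add: add_pos_nonneg)
  then show "0 < xstar_weight0 \<beta> 0" "0 < xstar_weight1 \<beta> 0" using \<beta> by (simp_all add: c0 c1)
  show "xstar_weight0 \<beta> 0 + xstar_weight1 \<beta> 0 = 1 / (2 * \<beta> * (2 * \<beta> - 1))"
    using \<beta> by (simp add: c0 c1 field_simps power2_eq_square)
qed

lemma xstar_limit_slack:
  fixes \<beta> :: real
  assumes \<beta>: "1/2 < \<beta>" "\<beta> < 1"
  defines "c0 \<equiv> xstar_weight0 \<beta> 0" and "c1 \<equiv> xstar_weight1 \<beta> 0"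
  shows "c1 * (2 * (1 - 2 * \<beta>)) > -1"
    and "c0 * ((1 - 2 * \<beta>) - (1 - 2 * \<beta>)^2) + c1 * ((1 - 2 * \<beta>) + (1 - 2 * \<beta>)^2) > -1"
    and "(c0 + c1) * ((1 - 2 * \<beta>) - \<bar>1 - 2 * \<beta>\<bar>^3) > -1"
proof -
  note c = xstar_weights_limit[OF \<beta>, folded c0_def c1_def]
  have "c1 * (2 * (1 - 2 * \<beta>)) = - 2 * (1 - \<beta>)"
    using \<beta> by (simp add: c(2) field_simps)
  then show "c1 * (2 * (1 - 2 * \<beta>)) > -1"
    using \<beta> by simp
  have "(1 - 2 * \<beta>) - (1 - 2 * \<beta>)^2 = - ((2 * \<beta> - 1) * (2 * \<beta>))"
    "(1 - 2 * \<beta>) + (1 - 2 * \<beta>)^2 = - ((2 * \<beta> - 1) * (2 - 2 * \<beta>))"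
    by (simp_all add: power2_eq_square algebra_simps)
  moreover have "c0 * ((2 * \<beta> - 1) * (2 * \<beta>)) = \<beta>^2 + (1 - \<beta>)^2"
    "c1 * ((2 * \<beta> - 1) * (2 - 2 * \<beta>)) = 2 * (1 - \<beta>)^2"
    using \<beta> by (simp_all add: c(1,2) field_simps power2_eq_square)
  ultimately have "c0 * ((1 - 2 * \<beta>) - (1 - 2 * \<beta>)^2) + c1 * ((1 - 2 * \<beta>) + (1 - 2 * \<beta>)^2)
      = -1 + 2 * (2 * \<beta> - 1) * (1 - \<beta>)"
    by (simp add: power2_eq_square algebra_simps)
  then show "c0 * ((1 - 2 * \<beta>) - (1 - 2 * \<beta>)^2) + c1 * ((1 - 2 * \<beta>) + (1 - 2 * \<beta>)^2) > -1"
    using \<beta> by simp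
  have "(c0 + c1) * ((1 - 2 * \<beta>) - \<bar>1 - 2 * \<beta>\<bar>^3) = - (1 + (2 * \<beta> - 1)^2) / (2 * \<beta>)"
    using \<beta> by (simp add: c(5) field_simps power2_eq_square power3_eq_cube)
  also have "\<dots> > -1"
  proof -
    have "(2 * \<beta> - 1) * (2 * \<beta> - 1) < 1 * (2 * \<beta> - 1)"
      using \<beta> by (intro mult_strict_right_mono) simp_all
    then show ?thesis using \<beta> by (simp add: field_simps power2_eq_square)
  qed
  finally show "(c0 + c1) * ((1 - 2 * \<beta>) - \<bar>1 - 2 * \<beta>\<bar>^3) > -1" .
qed

lemma eventually_xstar_slack:
  fixes r t c0 c1 M0 M1 :: "nat \<Rightarrow> real"
  assumes \<beta>: "1/2 < \<beta>" "\<beta> < 1" and r: "r \<longlonglongrightarrow> \<beta>" and t: "t \<longlonglongrightarrow> 0"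
    and c0: "c0 \<longlonglongrightarrow> xstar_weight0 \<beta> 0" and c1: "c1 \<longlonglongrightarrow> xstar_weight1 \<beta> 0"
    and M: "M0 \<longlonglongrightarrow> \<bar>1 - 2 * \<beta>\<bar> ^ 3" "M1 \<longlonglongrightarrow> \<bar>1 - 2 * \<beta>\<bar> ^ 3"
  shows "\<forall>\<^sub>F n in sequentially. 0 < c0 n \<and> 0 < c1 n \<and> 0 < 2 * r n - 1 + t n * (2 * r n + 2 * t n - 1)
    \<and> c1 n * (2 * (1 - 2 * (r n + t n))) > -1
    \<and> c0 n * ((1 - 2 * r n) - ((1 - 2 * r n)^2 - t n) / (1 - t n))
        + c1 n * ((1 - 2 * (r n + t n)) + ((1 - 2 * (r n + t n))^2 - t n) / (1 - t n)) > -1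
    \<and> c0 n * (1 - 2 * r n) + c1 n * (1 - 2 * (r n + t n)) - c0 n * M0 n - c1 n * M1 n > -1"
proof -
  define C0 C1 where "C0 = xstar_weight0 \<beta> 0" and "C1 = xstar_weight1 \<beta> 0"
  note limit = xstar_weights_limit(3,4)[OF \<beta>, folded C0_def C1_def]
    xstar_limit_slack[OF \<beta>, folded C0_def C1_def]
  note c = c0[folded C0_def] c1[folded C1_def]
  have "(\<lambda>n. 2 * r n - 1 + t n * (2 * r n + 2 * t n - 1)) \<longlonglongrightarrow> 2 * \<beta> - 1 + 0 * (2 * \<beta> + 2 * 0 - 1)"
    by (intro tendsto_intros r t)
  then have D: "\<forall>\<^sub>F n in sequentially. 0 < 2 * r n - 1 + t n * (2 * r n + 2 * t n - 1)"
    by (rule order_tendstoD(1)) (use \<beta> in simp)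
  have "(\<lambda>n. c1 n * (2 * (1 - 2 * (r n + t n)))) \<longlonglongrightarrow> C1 * (2 * (1 - 2 * (\<beta> + 0)))"
    by (intro tendsto_intros c r t)
  then have at_n_1: "\<forall>\<^sub>F n in sequentially. c1 n * (2 * (1 - 2 * (r n + t n))) > -1"
    by (rule order_tendstoD(1)) (use limit(3) in simp)
  have "(\<lambda>n. c0 n * ((1 - 2 * r n) - ((1 - 2 * r n)^2 - t n) / (1 - t n))
        + c1 n * ((1 - 2 * (r n + t n)) + ((1 - 2 * (r n + t n))^2 - t n) / (1 - t n)))
      \<longlonglongrightarrow> C0 * ((1 - 2 * \<beta>) - ((1 - 2 * \<beta>)^2 - 0) / (1 - 0))
        + C1 * ((1 - 2 * (\<beta> + 0)) + ((1 - 2 * (\<beta> + 0))^2 - 0) / (1 - 0))"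
    by (intro tendsto_intros c r t) simp_all
  then have at_n_2: "\<forall>\<^sub>F n in sequentially. c0 n * ((1 - 2 * r n) - ((1 - 2 * r n)^2 - t n) / (1 - t n))
        + c1 n * ((1 - 2 * (r n + t n)) + ((1 - 2 * (r n + t n))^2 - t n) / (1 - t n)) > -1"
    by (rule order_tendstoD(1)) (use limit(4) in simp)
  have "C0 * (1 - 2 * \<beta>) + C1 * (1 - 2 * (\<beta> + 0)) - C0 * \<bar>1 - 2 * \<beta>\<bar> ^ 3 - C1 * \<bar>1 - 2 * \<beta>\<bar> ^ 3
      = (C0 + C1) * ((1 - 2 * \<beta>) - \<bar>1 - 2 * \<beta>\<bar> ^ 3)"
    by (simp add: algebra_simps)
  moreover have "(\<lambda>n. c0 n * (1 - 2 * r n) + c1 n * (1 - 2 * (r n + t n)) - c0 n * M0 n - c1 n * M1 n)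
      \<longlonglongrightarrow> C0 * (1 - 2 * \<beta>) + C1 * (1 - 2 * (\<beta> + 0)) - C0 * \<bar>1 - 2 * \<beta>\<bar> ^ 3 - C1 * \<bar>1 - 2 * \<beta>\<bar> ^ 3"
    by (intro tendsto_intros c r t M)
  ultimately have middle: "\<forall>\<^sub>F n in sequentially.
      c0 n * (1 - 2 * r n) + c1 n * (1 - 2 * (r n + t n)) - c0 n * M0 n - c1 n * M1 n > -1"
    using limit(5) by (auto intro: order_tendstoD(1))
  show ?thesis
    using order_tendstoD(1)[OF c(1) limit(1)] order_tendstoD(1)[OF c(2) limit(2)] D at_n_1 at_n_2 middle
    by eventually_elim blast
qed

lemma eventually_lp_feasible_xstar:
  assumes \<beta>: "1/2 < \<beta>" "\<beta> < 1"
  shows "\<forall>\<^sub>F n in sequentially. lp_feasible n (xstar \<beta> n)"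
proof -
  define k where "k n = kidx \<beta> n" for n
  define r where "r n = real (k n) / real n" for n
  define t where "t n = 1 / real n" for n :: nat
  have r: "r \<longlonglongrightarrow> \<beta>" unfolding r_def k_def using \<beta> by (intro kidx_ratio_tendsto) simp
  have t: "t \<longlonglongrightarrow> 0" unfolding t_def by (rule lim_const_over_n)
  have r_Suc: "(\<lambda>n. real (k n + 1) / real n) = (\<lambda>n. r n + t n)"
    unfolding r_def t_def by (simp add: add_divide_distrib add.commute)
  have "\<bar>1 - 2 * \<beta>\<bar> < 1" using \<beta> by simp
  then have M: "(\<lambda>n. kraw_middle_bound n (k n)) \<longlonglongrightarrow> \<bar>1 - 2 * \<beta>\<bar> ^ 3"
      "(\<lambda>n. kraw_middle_bound n (k n + 1)) \<longlonglongrightarrow> \<bar>1 - 2 * \<beta>\<bar> ^ 3"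
    by (rule kraw_middle_bound_tendsto[rotated],
        use r tendsto_add[OF r t] in \<open>simp_all only: r_Suc r_def[abs_def] add_0_right\<close>)+
  have "\<forall>\<^sub>F n in sequentially. 2 \<le> k n \<and> k n + 3 \<le> n"
    unfolding k_def using \<beta> by (intro kidx_eventually_inside) simp_all
  moreover note eventually_xstar_slack[OF \<beta> r t xstar_weights_tendsto[OF r t \<beta>(1)] M]
  ultimately show ?thesis
  proof eventually_elim
    case (elim n)
    then show ?case
      by (intro lp_feasible_xstar[OF k_def r_def t_def]) (simp_all add: less_imp_le)
  qed
qed

lemma lp_objective_xstar_tendsto:
  assumes \<beta>: "1/2 < \<beta>" "\<beta> < 1"
  shows "(\<lambda>n. lp_objective n a (xstar \<beta> n)) \<longlonglongrightarrow> bound_fun a \<beta>"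
proof -
  define k where "k n = kidx \<beta> n" for n
  define r where "r n = real (k n) / real n" for n
  define t where "t n = 1 / real n" for n :: nat
  define C0 C1 where "C0 = xstar_weight0 \<beta> 0" and "C1 = xstar_weight1 \<beta> 0"
  define A where "A = 1 / a - 1"
  have r: "r \<longlonglongrightarrow> \<beta>" unfolding r_def k_def using \<beta> by (intro kidx_ratio_tendsto) simp
  have t: "t \<longlonglongrightarrow> 0" unfolding t_def by (rule lim_const_over_n)
  note c = xstar_weights_tendsto[OF r t \<beta>(1), folded C0_def C1_def]
  have "(\<lambda>n. - (xstar_weight0 (r n) (t n) * (1 + (1 - 2 * r n) * A)
      + xstar_weight1 (r n) (t n) * (1 + (1 - 2 * (r n + t n)) * A)))
    \<longlonglongrightarrow> - (C0 * (1 + (1 - 2 * \<beta>) * A) + C1 * (1 + (1 - 2 * (\<beta> + 0)) * A))"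
    by (intro tendsto_intros c r t)
  also have "- (C0 * (1 + (1 - 2 * \<beta>) * A) + C1 * (1 + (1 - 2 * (\<beta> + 0)) * A))
      = - ((C0 + C1) * (1 + (1 - 2 * \<beta>) * A))"
    by (simp add: algebra_simps)
  also have "\<dots> = bound_fun a \<beta>"
    unfolding xstar_weights_limit(5)[OF \<beta>, folded C0_def C1_def] bound_fun_def A_def
    by (simp add: minus_divide_left)
  finally show ?thesis
  proof (rule Lim_transform_eventually)
    have "\<forall>\<^sub>F n in sequentially. 2 \<le> k n \<and> k n + 3 \<le> n"
      using kidx_eventually_inside[of \<beta>] \<beta> unfolding k_def[symmetric] by simp
    then show "\<forall>\<^sub>F n in sequentially. - (xstar_weight0 (r n) (t n) * (1 + (1 - 2 * r n) * A)
        + xstar_weight1 (r n) (t n) * (1 + (1 - 2 * (r n + t n)) * A)) = lp_objective n a (xstar \<beta> n)"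
    proof eventually_elim
      case (elim n)
      then show ?case
        unfolding A_def by (intro lp_objective_xstar[OF k_def r_def t_def, symmetric]) simp_all
    qed
  qed
qed

lemma bound_fun_le_theta:
  assumes a: "0 < a" "a \<le> 1/2" and b: "1/2 < b" "b < 1"
  shows "bound_fun a b \<le> theta a"
proof -
  define u where "u = 2 * b - 1"
  define A where "A = 1 / a - 1"
  have u: "0 < u" "u < 1" unfolding u_def using b by auto
  have bound_fun_u: "bound_fun a b = (u * A - 1) / ((1 + u) * u)"
    unfolding bound_fun_def u_def A_def using b by (simp add: field_simps)
  have "u * A - 1 \<le> theta a * ((1 + u) * u)"
  proof (cases "a < 1/4")
    case True
    define s where "s = sqrt a"
    have s: "0 < s" "a = s^2" unfolding s_def using a by auto
    have "theta a * ((1 + u) * u) - (u * A - 1) = ((1 - s) * u - s)^2 / s^2"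
      unfolding theta_def A_def s_def[symmetric] using True s
      by (simp add: field_simps power2_eq_square)
    moreover have "((1 - s) * u - s)^2 / s^2 \<ge> 0" by simp
    ultimately show ?thesis by linarith
  next
    case False
    have "theta a * ((1 + u) * u) - (u * A - 1) = ((A - 1) * u - 2) * (u - 1) / 2"
      unfolding theta_def A_def using False by (simp add: field_simps)
    moreover have "(A - 1) * u \<le> 2 * 1"
      unfolding A_def using False a u by (intro mult_mono) (simp_all add: field_simps)
    then have "((A - 1) * u - 2) * (u - 1) \<ge> 0"
      using u by (intro mult_nonpos_nonpos) simp_all
    ultimately show ?thesis by simp
  qed
  then show ?thesis
    unfolding bound_fun_u using u by (simp add: divide_le_eq)
qed

lemma bound_fun_optimum:
  assumes "0 < a" "a < 1/4"
  shows "1 / (2 * (1 - sqrt a)) \<in> {1/2<..<1} \<and> bound_fun a (1 / (2 * (1 - sqrt a))) = theta a"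
proof -
  define s where "s = sqrt a"
  have s: "0 < s" "s < 1/2" "a = s^2"
    unfolding s_def using assms real_sqrt_less_iff[of a "1/4"] by (auto simp: real_sqrt_divide)
  have "1 / (2 * (1 - s)) \<in> {1/2<..<1}" using s by (simp add: field_simps)
  moreover have "bound_fun a (1 / (2 * (1 - s))) = (1 - s)^2 / s^2"
    unfolding bound_fun_def s(3) using s by (simp add: field_simps power2_eq_square)
  ultimately show ?thesis
    using assms unfolding theta_def s_def by simp
qed

lemma SUP_bound_fun_eq_theta:
  assumes a: "0 < a" "a \<le> 1/2"
  shows "(SUP b\<in>{1/2<..<1}. bound_fun a b) = theta a"
proof (rule antisym)
  have upper: "bound_fun a b \<le> theta a" if "b \<in> {1/2<..<1}" for b
    using bound_fun_le_theta[OF a] that by simp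
  then show "(SUP b\<in>{1/2<..<1}. bound_fun a b) \<le> theta a"
    by (intro cSUP_least) auto
  have bdd: "bdd_above (bound_fun a ` {1/2<..<1})"
    using upper by (intro bdd_aboveI2)
  show "theta a \<le> (SUP b\<in>{1/2<..<1}. bound_fun a b)"
  proof (cases "a < 1/4")
    case True
    then show ?thesis using bound_fun_optimum[OF a(1) True] cSUP_upper[OF _ bdd] by metis
  next
    case False
    have "(bound_fun a \<longlongrightarrow> - (1 + (1 - 2 * 1) * (1 / a - 1)) * (1 / (2 * 1 * (2 * 1 - 1)))) (at_left (1::real))"
      unfolding bound_fun_def by (intro tendsto_intros) simp_all
    moreover have "- (1 + (1 - 2 * 1) * (1 / a - 1)) * (1 / (2 * 1 * (2 * 1 - 1))) = theta a"
      unfolding theta_def using False by simp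
    moreover have "\<forall>\<^sub>F b in at_left (1::real). b \<in> {1/2<..<1}"
      by (rule eventually_at_left_real) simp
    then have "\<forall>\<^sub>F b in at_left 1. bound_fun a b \<le> (SUP b\<in>{1/2<..<1}. bound_fun a b)"
      by eventually_elim (rule cSUP_upper[OF _ bdd])
    ultimately show ?thesis
      using tendsto_le[OF trivial_limit_at_left_real tendsto_const] by metis
  qed
qed

lemma Liminf_Lambda_bar_ge:
  assumes "S \<noteq> {}"
    and feasible: "\<And>b. b \<in> S \<Longrightarrow> \<forall>\<^sub>F n in sequentially. lp_feasible n (x b n)"
    and objective: "\<And>b. b \<in> S \<Longrightarrow> (\<lambda>n. lp_objective n a (x b n)) \<longlonglongrightarrow> f b"
  shows "ereal (SUP b\<in>S. f b) \<le> liminf (\<lambda>n. Lambda_bar n a)"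
proof -
  define L where "L = liminf (\<lambda>n. Lambda_bar n a)"
  have each: "ereal (f b) \<le> L" if b: "b \<in> S" for b
  proof -
    have "\<forall>\<^sub>F n in sequentially. ereal (lp_objective n a (x b n)) \<le> Lambda_bar n a"
      using feasible[OF b] by eventually_elim (auto simp: Lambda_bar_def intro: SUP_upper)
    then have "liminf (\<lambda>n. ereal (lp_objective n a (x b n))) \<le> L"
      unfolding L_def by (rule Liminf_mono)
    moreover have "liminf (\<lambda>n. ereal (lp_objective n a (x b n))) = ereal (f b)"
      using objective[OF b] by (intro lim_imp_Liminf) simp_all
    ultimately show ?thesis by simp
  qed
  have "ereal (SUP b\<in>S. f b) \<le> L"
  proof (cases L)
    case (real l)
    then have "(SUP b\<in>S. f b) \<le> l" using each by (intro cSUP_least[OF assms(1)]) auto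
    then show ?thesis using real by simp
  next
    case MInf
    then show ?thesis using each assms(1) by auto
  qed simp
  then show ?thesis unfolding L_def .
qed

theorem mainTheorem5:
  fixes a \<beta> :: real
  assumes "0 < a" "a \<le> 1/2" "1/2 < \<beta>" "\<beta> < 1"
  shows "(\<forall>\<^sub>F n in sequentially. lp_feasible n (xstar \<beta> n))
    \<and> ((\<lambda>n. lp_objective n a (xstar \<beta> n)) \<longlonglongrightarrow> bound_fun a \<beta>)
    \<and> liminf (\<lambda>n. Lambda_bar n a) \<ge> ereal (SUP b\<in>{1/2<..<1}. bound_fun a b)
    \<and> (SUP b\<in>{1/2<..<1}. bound_fun a b) = theta a
    \<and> (a < 1/4 \<longrightarrow> 1 / (2 * (1 - sqrt a)) \<in> {1/2<..<1}
          \<and> bound_fun a (1 / (2 * (1 - sqrt a))) = theta a)"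
proof (intro conjI impI)
  show "\<forall>\<^sub>F n in sequentially. lp_feasible n (xstar \<beta> n)"
    using assms(3,4) by (rule eventually_lp_feasible_xstar)
  show "(\<lambda>n. lp_objective n a (xstar \<beta> n)) \<longlonglongrightarrow> bound_fun a \<beta>"
    using assms(3,4) by (rule lp_objective_xstar_tendsto)
  show "liminf (\<lambda>n. Lambda_bar n a) \<ge> ereal (SUP b\<in>{1/2<..<1}. bound_fun a b)"
    by (rule Liminf_Lambda_bar_ge[where x = xstar])
      (auto intro: eventually_lp_feasible_xstar lp_objective_xstar_tendsto)
  show "(SUP b\<in>{1/2<..<1}. bound_fun a b) = theta a"
    using assms(1,2) by (rule SUP_bound_fun_eq_theta)
  show "1 / (2 * (1 - sqrt a)) \<in> {1/2<..<1}" "bound_fun a (1 / (2 * (1 - sqrt a))) = theta a"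
    if "a < 1/4" using bound_fun_optimum[OF assms(1) that] by auto
qed

end
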